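(* Let $n \ge 1$ and $r \ge 0$ be integers. (a) Let $\lambda$ be a partition with at most $n+1$ parts and $\lambda_1 \le r$. Then $(x_1 \cdots x_n)^r \, \mathrm{Symp}_{2n+1}(\lambda; x_1, \dots, x_n; z)$ is a polynomial in $x_1, \dots, x_n$, with coefficients depending on $z$. Moreover, $$\big[(x_1 \cdots x_n)^r \, \mathrm{Symp}_{2n+1}(\lambda; x_1, \dots, x_n; z)\big]\big|_{x_1=0} = \begin{cases} (x_2 \cdots x_n)^r \, \mathrm{Symp}_{2n-1}((\lambda_2, \dots, \lambda_{n+1}); x_2, \dots, x_n; z) & \text{if } \lambda_1 = r,\\ 0 & \text{otherwise.}\end{cases}$$ (b) Let $\lambda$ be a partition with at most $n$ parts and $\lambda_1 \le r$. Then $(x_1 \cdots x_n)^r \, \mathrm{Symp}_{2n}(\lambda; x_1, \dots, x_n)$ is a polynomial in $x_1, \dots, x_n$. Moreover, $$\big[(x_1 \cdots x_n)^r \, \mathrm{Symp}_{2n}(\lambda; x_1, \dots, x_n)\big]\big|_{x_1=0} = \begin{cases} (x_2 \cdots x_n)^r \, \mathrm{Symp}_{2(n-1)}((\lambda_2, \dots, \lambda_n); x_2, \dots, x_n) & \text{if } \lambda_1 = r,\\ 0 & \text{otherwise.}\end{cases}$$ Here $F|_{x_1=0}$ denotes the result of substituting $x_1 = 0$ in $F$.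
   Context: All partitions are padded with zeros as needed, so $\lambda = (\lambda_1 \ge \lambda_2 \ge \dots \ge \lambda_{n+1} \ge 0)$. The variables $x_1, \dots, x_n, z$ are indeterminates. For $m \ge 0$, a partition $\mu$ with at most $m+1$ parts, and variables $u_1, \dots, u_m, z$, let $A_\mu(u_1, \dots, u_m; z)$ be the $(m+1) \times (m+1)$ matrix with the following entries: - for $1 \le i \le m$ and $1 \le j \le m+1$, the $(i,j)$ entry is $$\big(u_i^{\mu_j+m+2-j} - u_i^{-(\mu_j+m+2-j)}\big) - z^{-1}\big(u_i^{\mu_j+m+1-j} - u_i^{-(\mu_j+m+1-j)}\big);$$ - for $1 \le j \le m+1$, the $(m+1,j)$ entry is $z^{\mu_j+m+1-j}$. The odd symplectic character $\mathrm{Symp}_{2m+1}(\mu; u_1, \dots, u_m; z)$ is given by the bialternant formula $$\mathrm{Symp}_{2m+1}(\mu; u_1, \dots, u_m; z) = \frac{\det A_\mu(u_1,\dots,u_m;z)}{\det A_\varnothing(u_1,\dots,u_m;z)},$$ where $\varnothing$ is the empty partition. For a partition $\mu$ with at most $m$ parts, $\mathrm{Symp}_{2m}(\mu; u_1, \dots, u_m)$ denotes the irreducible symplectic character: $$\mathrm{Symp}_{2m}(\mu; u_1, \dots, u_m) = \frac{\det\big(u_i^{\mu_j+m+1-j} - u_i^{-(\mu_j+m+1-j)}\big)_{1\le i,j\le m}}{\det\big(u_i^{m+1-j} - u_i^{-(m+1-j)}\big)_{1\le i,j\le m}}.$$ *)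

theory Defs
  imports Complex_Main "Jordan_Normal_Form.Determinant"
begin

text \<open>Conventions: variables u_1..u_m are represented by u 0, ..., u (m-1);
  partitions mu are functions nat => nat with mu_j = mu (j-1) (0-based).\<close>

definition is_partition :: "(nat \<Rightarrow> nat) \<Rightarrow> nat \<Rightarrow> bool" where
  "is_partition mu k \<longleftrightarrow> (\<forall>i j. i \<le> j \<longrightarrow> mu j \<le> mu i) \<and> (\<forall>i\<ge>k. mu i = 0)"

definition odd_symp_mat :: "nat \<Rightarrow> (nat \<Rightarrow> nat) \<Rightarrow> (nat \<Rightarrow> complex) \<Rightarrow> complex \<Rightarrow> complex mat" where
  "odd_symp_mat m mu u z = mat (m+1) (m+1) (\<lambda>(i,j).
     if i < m then
       (u i ^ (mu j + m + 1 - j) - inverse (u i) ^ (mu j + m + 1 - j))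
       - inverse z * (u i ^ (mu j + m - j) - inverse (u i) ^ (mu j + m - j))
     else z ^ (mu j + m - j))"

definition odd_symp_den :: "nat \<Rightarrow> (nat \<Rightarrow> complex) \<Rightarrow> complex \<Rightarrow> complex" where
  "odd_symp_den m u z = det (odd_symp_mat m (\<lambda>_. 0) u z)"

definition Symp_odd :: "nat \<Rightarrow> (nat \<Rightarrow> nat) \<Rightarrow> (nat \<Rightarrow> complex) \<Rightarrow> complex \<Rightarrow> complex" where
  "Symp_odd m mu u z = det (odd_symp_mat m mu u z) / odd_symp_den m u z"

definition even_symp_mat :: "nat \<Rightarrow> (nat \<Rightarrow> nat) \<Rightarrow> (nat \<Rightarrow> complex) \<Rightarrow> complex mat" where
  "even_symp_mat m mu u = mat m m (\<lambda>(i,j).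
     u i ^ (mu j + m - j) - inverse (u i) ^ (mu j + m - j))"

definition even_symp_den :: "nat \<Rightarrow> (nat \<Rightarrow> complex) \<Rightarrow> complex" where
  "even_symp_den m u = det (even_symp_mat m (\<lambda>_. 0) u)"

definition Symp_even :: "nat \<Rightarrow> (nat \<Rightarrow> nat) \<Rightarrow> (nat \<Rightarrow> complex) \<Rightarrow> complex" where
  "Symp_even m mu u = det (even_symp_mat m mu u) / even_symp_den m u"

text \<open>Polynomials in x_1..x_n (x 0 .. x (n-1)): finitely supported coefficient
  functions on exponent vectors supported in {0..<n}.\<close>
definition is_mpoly :: "nat \<Rightarrow> ((nat \<Rightarrow> nat) \<Rightarrow> complex) \<Rightarrow> bool" where
  "is_mpoly n c \<longleftrightarrow> finite {a. c a \<noteq> 0} \<and> (\<forall>a. c a \<noteq> 0 \<longrightarrow> (\<forall>i\<ge>n. a i = 0))"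

definition mpoly_eval :: "nat \<Rightarrow> ((nat \<Rightarrow> nat) \<Rightarrow> complex) \<Rightarrow> (nat \<Rightarrow> complex) \<Rightarrow> complex" where
  "mpoly_eval n c x = (\<Sum>a\<in>{a. c a \<noteq> 0}. c a * (\<Prod>i<n. x i ^ a i))"

end

theory Submission
  imports Defs
begin

(* Put y_i = x_i + 1/x_i.  Every entry u^k - u^(-k) of the bialternants equals (u - 1/u) U_(k-1)(y/2)
   with U the Chebyshev polynomials of the second kind, and P_k = U_k(y/2) - z^(-1) U_(k-1)(y/2) gives
   both the odd-case entries, as (u - 1/u) P_k(u + 1/u), and the last row, as z^k = P_k(z + 1/z).
   After pulling the factors x_i - 1/x_i out of the rows, numerator and denominator become alternants
   det(p_j(y_i)) of polynomials.  Newton interpolation writes such an alternant as the Vandermonde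
   determinant times a polynomial in the y_i; since the alternant has degree lambda_1 + n (resp.
   lambda_1 + n - 1) in each y_i and the Vandermonde exactly n (resp. n - 1), that polynomial has
   degree at most lambda_1 <= r in each y_i, while for the empty partition it is constant.  Hence the
   character is a polynomial of degree <= r in each x_i + 1/x_i, and (x_1 ... x_n)^r clears all
   denominators.

   For x_1 -> 0, the first row of the matrix times x_1^(lambda_1 + n + 1) (resp. x_1^(lambda_1 + n))
   tends to (-1, 0, ..., 0), so by Laplace expansion the determinant behaves like minus that power
   of 1/x_1 times the minor, which is the matrix of (lambda_2, ...) in x_2, ..., x_n.  Comparing with
   the denominator leaves the factor x_1^(r - lambda_1), and continuity of the polynomial gives its
   value at x_1 = 0. *)

section \<open>Polynomial functions\<close>

lemma mpoly_eval_superset: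
  assumes "finite A" "{a. c a \<noteq> 0} \<subseteq> A"
  shows "mpoly_eval n c x = (\<Sum>a\<in>A. c a * (\<Prod>i<n. x i ^ a i))"
  unfolding mpoly_eval_def by (rule sum.mono_neutral_left) (use assms in auto)

lemma is_mpoly_restrict: "is_mpoly n c \<Longrightarrow> is_mpoly n (\<lambda>a. if P a then c a else 0)"
  unfolding is_mpoly_def by (auto elim: finite_subset[rotated])

definition mpoly_fun :: "nat \<Rightarrow> ((nat \<Rightarrow> complex) \<Rightarrow> complex) \<Rightarrow> bool" where
  "mpoly_fun n f \<longleftrightarrow> (\<exists>c. is_mpoly n c \<and> (\<forall>x. f x = mpoly_eval n c x))"

lemma mpoly_fun_const: "mpoly_fun n (\<lambda>_. k)"
proof -
  define c where "c = (\<lambda>a::nat\<Rightarrow>nat. if a = (\<lambda>_. 0) then k else 0)"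
  have supp: "{a. c a \<noteq> 0} \<subseteq> {\<lambda>_. 0}" by (auto simp: c_def split: if_splits)
  have "is_mpoly n c" unfolding is_mpoly_def using supp finite_subset by auto
  moreover have "mpoly_eval n c x = k" for x
    by (subst mpoly_eval_superset[OF _ supp]) (auto simp: c_def)
  ultimately show ?thesis unfolding mpoly_fun_def by metis
qed

lemma mpoly_fun_var:
  assumes "i < n"
  shows "mpoly_fun n (\<lambda>x. x i)"
proof -
  define e where "e = (\<lambda>j::nat. if j = i then 1 else (0::nat))"
  define c where "c = (\<lambda>a::nat\<Rightarrow>nat. if a = e then 1 else (0::complex))"
  have supp: "{a. c a \<noteq> 0} \<subseteq> {e}" by (auto simp: c_def split: if_splits)
  have "is_mpoly n c" unfolding is_mpoly_def using supp finite_subset assms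
    by (auto simp: c_def e_def split: if_splits)
  moreover have "mpoly_eval n c x = x i" for x
  proof -
    have "(\<Prod>l<n. x l ^ e l) = (\<Prod>l<n. if l = i then x l else 1)"
      by (rule prod.cong) (auto simp: e_def)
    also have "\<dots> = x i" using assms by (simp add: prod.delta)
    finally show ?thesis
      by (subst mpoly_eval_superset[OF _ supp]) (auto simp: c_def)
  qed
  ultimately show ?thesis unfolding mpoly_fun_def by metis
qed

lemma mpoly_fun_add:
  assumes "mpoly_fun n f" "mpoly_fun n g"
  shows "mpoly_fun n (\<lambda>x. f x + g x)"
proof -
  obtain c1 where c1: "is_mpoly n c1" "\<And>x. f x = mpoly_eval n c1 x"
    using assms(1) unfolding mpoly_fun_def by auto
  obtain c2 where c2: "is_mpoly n c2" "\<And>x. g x = mpoly_eval n c2 x"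
    using assms(2) unfolding mpoly_fun_def by auto
  define c where "c = (\<lambda>a. c1 a + c2 a)"
  let ?A = "{a. c1 a \<noteq> 0} \<union> {a. c2 a \<noteq> 0}"
  have fin: "finite ?A" using c1 c2 unfolding is_mpoly_def by auto
  have supp: "{a. c a \<noteq> 0} \<subseteq> ?A" by (auto simp: c_def)
  have "is_mpoly n c"
    using finite_subset[OF supp fin] c1(1) c2(1) unfolding is_mpoly_def c_def
    by (metis add.right_neutral)
  moreover have "f x + g x = mpoly_eval n c x" for x
    unfolding c1(2) c2(2)
    by (subst (1 2 3) mpoly_eval_superset[OF fin]) (auto simp: c_def algebra_simps sum.distrib)
  ultimately show ?thesis unfolding mpoly_fun_def by metis
qed

lemma mpoly_fun_mult:
  assumes "mpoly_fun n f" "mpoly_fun n g"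
  shows "mpoly_fun n (\<lambda>x. f x * g x)"
proof -
  obtain c1 where c1: "is_mpoly n c1" "\<And>x. f x = mpoly_eval n c1 x"
    using assms(1) unfolding mpoly_fun_def by auto
  obtain c2 where c2: "is_mpoly n c2" "\<And>x. g x = mpoly_eval n c2 x"
    using assms(2) unfolding mpoly_fun_def by auto
  define A1 where "A1 = {a. c1 a \<noteq> 0}"
  define A2 where "A2 = {a. c2 a \<noteq> 0}"
  have fin: "finite A1" "finite A2" using c1(1) c2(1) by (simp_all add: is_mpoly_def A1_def A2_def)
  define plus where "plus = (\<lambda>p::(nat\<Rightarrow>nat)\<times>(nat\<Rightarrow>nat). (\<lambda>i. fst p i + snd p i))"
  define c where "c = (\<lambda>a. \<Sum>p\<in>{p\<in>A1\<times>A2. plus p = a}. c1 (fst p) * c2 (snd p))"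
  let ?B = "plus ` (A1 \<times> A2)"
  have finB: "finite ?B" using fin by simp
  have supp: "{a. c a \<noteq> 0} \<subseteq> ?B"
  proof
    fix a assume "a \<in> {a. c a \<noteq> 0}"
    then have "{p\<in>A1\<times>A2. plus p = a} \<noteq> {}" unfolding c_def by force
    then show "a \<in> ?B" by blast
  qed
  have "is_mpoly n c" unfolding is_mpoly_def
  proof (intro conjI allI impI)
    show "finite {a. c a \<noteq> 0}" using finite_subset[OF supp finB] .
    fix a i assume "c a \<noteq> 0" "n \<le> i"
    then obtain b d where bd: "b \<in> A1" "d \<in> A2" "a = plus (b, d)" using supp by blast
    have "b i = 0" "d i = 0"
      using bd(1,2) c1(1) c2(1) \<open>n \<le> i\<close> unfolding is_mpoly_def A1_def A2_def by blast+
    then show "a i = 0" using bd(3) by (simp add: plus_def)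
  qed
  moreover have "f x * g x = mpoly_eval n c x" for x
  proof -
    let ?X = "\<lambda>a. (\<Prod>i<n. x i ^ a i)"
    have "mpoly_eval n c x = (\<Sum>a\<in>?B. c a * ?X a)" by (rule mpoly_eval_superset[OF finB supp])
    also have "\<dots> = (\<Sum>a\<in>?B. \<Sum>p\<in>{p\<in>A1\<times>A2. plus p = a}. c1 (fst p) * c2 (snd p) * ?X (plus p))"
      unfolding c_def sum_distrib_right by (rule sum.cong) auto
    also have "\<dots> = (\<Sum>p\<in>A1\<times>A2. c1 (fst p) * c2 (snd p) * ?X (plus p))"
      by (rule sum.group) (use fin in auto)
    also have "\<dots> = (\<Sum>p\<in>A1\<times>A2. (c1 (fst p) * ?X (fst p)) * (c2 (snd p) * ?X (snd p)))"
      by (rule sum.cong) (auto simp: plus_def power_add prod.distrib)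
    also have "\<dots> = (\<Sum>a\<in>A1. c1 a * ?X a) * (\<Sum>b\<in>A2. c2 b * ?X b)"
      by (simp add: sum_product sum.cartesian_product case_prod_beta)
    also have "\<dots> = f x * g x" unfolding c1(2) c2(2) mpoly_eval_def A1_def A2_def ..
    finally show ?thesis by simp
  qed
  ultimately show ?thesis unfolding mpoly_fun_def by metis
qed

lemma mpoly_fun_cong: "mpoly_fun n f \<Longrightarrow> (\<And>x. f x = g x) \<Longrightarrow> mpoly_fun n g"
  by (metis ext)

lemma mpoly_fun_sum:
  "finite A \<Longrightarrow> (\<And>a. a \<in> A \<Longrightarrow> mpoly_fun n (f a)) \<Longrightarrow> mpoly_fun n (\<lambda>x. \<Sum>a\<in>A. f a x)"
  by (induction A rule: finite_induct) (auto intro: mpoly_fun_add mpoly_fun_const)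

lemma mpoly_fun_prod:
  "finite A \<Longrightarrow> (\<And>a. a \<in> A \<Longrightarrow> mpoly_fun n (f a)) \<Longrightarrow> mpoly_fun n (\<lambda>x. \<Prod>a\<in>A. f a x)"
  by (induction A rule: finite_induct) (auto intro: mpoly_fun_mult mpoly_fun_const)

lemma mpoly_fun_power: "mpoly_fun n f \<Longrightarrow> mpoly_fun n (\<lambda>x. f x ^ k)"
  by (induction k) (auto intro: mpoly_fun_mult mpoly_fun_const)

lemma mpoly_fun_if: "mpoly_fun n f \<Longrightarrow> mpoly_fun n (\<lambda>x. if b then f x else 0)"
  by (cases b) (auto intro: mpoly_fun_const)

lemma mpoly_fun_comp:
  assumes "mpoly_fun m f" "\<And>i. i < m \<Longrightarrow> mpoly_fun n (\<lambda>y. g y i)"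
  shows "mpoly_fun n (\<lambda>y. f (g y))"
proof -
  obtain c where c: "is_mpoly m c" "\<And>x. f x = mpoly_eval m c x"
    using assms(1) unfolding mpoly_fun_def by auto
  have "mpoly_fun n (\<lambda>y. \<Sum>a\<in>{a. c a \<noteq> 0}. c a * (\<Prod>i<m. g y i ^ a i))"
    using c(1) unfolding is_mpoly_def
    by (intro mpoly_fun_sum mpoly_fun_mult mpoly_fun_const mpoly_fun_prod mpoly_fun_power assms(2)) auto
  then show ?thesis by (rule mpoly_fun_cong) (simp add: c(2) mpoly_eval_def)
qed

lemma mpoly_fun_det:
  assumes "\<And>i j. i < M \<Longrightarrow> j < M \<Longrightarrow> mpoly_fun n (e i j)"
  shows "mpoly_fun n (\<lambda>y. det (mat M M (\<lambda>(i, j). e i j y)))"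
proof -
  have "mpoly_fun n (\<lambda>y. \<Sum>p\<in>{p. p permutes {0..<M}}. signof p * (\<Prod>i = 0..<M. e i (p i) y))"
    by (intro mpoly_fun_sum mpoly_fun_mult mpoly_fun_const mpoly_fun_prod)
      (auto simp: finite_permutations permutes_in_image intro: assms)
  then show ?thesis
    by (rule mpoly_fun_cong) (auto simp: det_def'[where n=M] permutes_in_image intro!: sum.cong prod.cong)
qed

lemma isCont_mpoly_eval_upd: "isCont (\<lambda>t. mpoly_eval n c (x(i := t))) s"
proof -
  have "isCont (\<lambda>t. (x(i := t)) l) s" for l by (cases "l = i") auto
  then show ?thesis unfolding mpoly_eval_def by (intro continuous_intros)
qed

definition var_poly :: "nat \<Rightarrow> ((nat \<Rightarrow> nat) \<Rightarrow> complex) \<Rightarrow> (nat \<Rightarrow> complex) \<Rightarrow> nat \<Rightarrow> complex poly" where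
  "var_poly n c y i = (\<Sum>a\<in>{a. c a \<noteq> 0}. monom (c a * (\<Prod>l\<in>{..<n}-{i}. y l ^ a l)) (a i))"

lemma poly_var_poly:
  assumes "i < n"
  shows "poly (var_poly n c y i) t = mpoly_eval n c (y(i := t))"
  unfolding var_poly_def mpoly_eval_def poly_sum poly_monom
proof (rule sum.cong[OF refl])
  fix a
  have "(\<Prod>l<n. (y(i := t)) l ^ a l) = t ^ a i * (\<Prod>l\<in>{..<n}-{i}. (y(i := t)) l ^ a l)"
    using assms by (subst prod.remove[of _ i]) auto
  also have "(\<Prod>l\<in>{..<n}-{i}. (y(i := t)) l ^ a l) = (\<Prod>l\<in>{..<n}-{i}. y l ^ a l)"
    by (rule prod.cong) auto
  finally show "c a * (\<Prod>l\<in>{..<n}-{i}. y l ^ a l) * t ^ a i = c a * (\<Prod>l<n. (y(i := t)) l ^ a l)"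
    by simp
qed

lemma coeff_var_poly:
  assumes "is_mpoly n c"
  shows "coeff (var_poly n c y i) k = (\<Sum>a\<in>{a. c a \<noteq> 0 \<and> a i = k}. c a * (\<Prod>l\<in>{..<n}-{i}. y l ^ a l))"
proof -
  have "finite {a. c a \<noteq> 0}" using assms by (simp add: is_mpoly_def)
  then show ?thesis
    unfolding var_poly_def coeff_sum coeff_monom by (simp add: sum.inter_filter[symmetric])
qed

text \<open>In \<open>y i\<close>, \<open>V\<close> has degree \<open>m\<close> and \<open>F = V * P\<close> degree at most \<open>D\<close>, so \<open>P\<close> has degree at most \<open>D - m\<close>.\<close>
lemma mpoly_eval_drop_high_terms:
  assumes c: "is_mpoly n c" and i: "i < n"
    and F: "\<And>y. F y = V y * mpoly_eval n c y"
    and F_deg: "\<And>y. \<exists>p. (\<forall>t. F (y(i := t)) = poly p t) \<and> degree p \<le> D"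
    and V_deg: "\<And>y. \<exists>\<kappa> q. degree q = m \<and> (\<forall>t. V (y(i := t)) = \<kappa> * poly q t)"
  shows "F y = V y * mpoly_eval n (\<lambda>a. if a i \<le> D - m then c a else 0) y"
proof -
  define c' where "c' = (\<lambda>a. if a i \<le> D - m then c a else 0)"
  have c': "is_mpoly n c'" unfolding c'_def by (rule is_mpoly_restrict[OF c])
  obtain pF where pF: "\<And>t. F (y(i := t)) = poly pF t" "degree pF \<le> D" using F_deg by blast
  obtain \<kappa> q where q: "degree q = m" "\<And>t. V (y(i := t)) = \<kappa> * poly q t" using V_deg by blast
  define pS where "pS = var_poly n c y i"
  show ?thesis
  proof (cases "smult \<kappa> q = 0")
    case True
    then have "V y = 0" using q(2)[of "y i"] by auto
    then show ?thesis using F[of y] by (simp add: c'_def)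
  next
    case False
    have "poly pF t = poly (smult \<kappa> q * pS) t" for t
      using F[of "y(i := t)"] pF(1)[of t] q(2)[of t] poly_var_poly[OF i, of c y t] by (simp add: pS_def)
    then have pF_eq: "pF = smult \<kappa> q * pS" using poly_eq_poly_eq_iff by blast
    have high: "coeff pS k = 0" if "k > D - m" for k
    proof (cases "pS = 0")
      case False
      then have "degree pF = m + degree pS"
        using pF_eq degree_mult_eq[OF \<open>smult \<kappa> q \<noteq> 0\<close>] \<open>smult \<kappa> q \<noteq> 0\<close> q(1)
        by (metis degree_smult_eq smult_eq_0_iff)
      then show ?thesis using pF(2) that by (simp add: coeff_eq_0)
    qed simp
    have "coeff (var_poly n c' y i) k = coeff pS k" for k
    proof (cases "k \<le> D - m")
      case True
      then have "{a. c' a \<noteq> 0 \<and> a i = k} = {a. c a \<noteq> 0 \<and> a i = k}" by (auto simp: c'_def)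
      then show ?thesis
        unfolding pS_def coeff_var_poly[OF c] coeff_var_poly[OF c'] using True
        by (intro sum.cong) (auto simp: c'_def)
    next
      case False
      then have "{a. c' a \<noteq> 0 \<and> a i = k} = {}" by (auto simp: c'_def)
      then show ?thesis using high[of k] False unfolding coeff_var_poly[OF c'] by (simp only: sum.empty)
    qed
    then have "var_poly n c' y i = pS" by (simp add: poly_eq_iff)
    then have "mpoly_eval n c' y = mpoly_eval n c y"
      using poly_var_poly[OF i, of c' y "y i"] poly_var_poly[OF i, of c y "y i"] by (simp add: pS_def)
    then show ?thesis using F[of y] by (simp add: c'_def)
  qed
qed

lemma mpoly_quotient_degree_le:
  assumes c: "is_mpoly n c"
    and F: "\<And>y. F y = V y * mpoly_eval n c y"
    and F_deg: "\<And>i y. i < n \<Longrightarrow> \<exists>p. (\<forall>t. F (y(i := t)) = poly p t) \<and> degree p \<le> D"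
    and V_deg: "\<And>i y. i < n \<Longrightarrow> \<exists>\<kappa> q. degree q = m \<and> (\<forall>t. V (y(i := t)) = \<kappa> * poly q t)"
  shows "\<exists>c'. is_mpoly n c' \<and> (\<forall>a. c' a \<noteq> 0 \<longrightarrow> (\<forall>i<n. a i \<le> D - m))
           \<and> (\<forall>y. F y = V y * mpoly_eval n c' y)"
proof -
  have "\<exists>c'. is_mpoly n c' \<and> (\<forall>a. c' a \<noteq> 0 \<longrightarrow> (\<forall>i<j. a i \<le> D - m))
           \<and> (\<forall>y. F y = V y * mpoly_eval n c' y)" if "j \<le> n" for j
    using that
  proof (induction j)
    case 0
    then show ?case using c F by auto
  next
    case (Suc j)
    then obtain c1 where c1: "is_mpoly n c1" "\<forall>a. c1 a \<noteq> 0 \<longrightarrow> (\<forall>i<j. a i \<le> D - m)"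
      "\<forall>y. F y = V y * mpoly_eval n c1 y" by auto
    define c2 where "c2 = (\<lambda>a. if a j \<le> D - m then c1 a else 0)"
    have "is_mpoly n c2" unfolding c2_def by (rule is_mpoly_restrict[OF c1(1)])
    moreover have "\<forall>a. c2 a \<noteq> 0 \<longrightarrow> (\<forall>i<Suc j. a i \<le> D - m)"
      using c1(2) by (auto simp: c2_def less_Suc_eq)
    moreover have "\<forall>y. F y = V y * mpoly_eval n c2 y"
      unfolding c2_def using mpoly_eval_drop_high_terms[OF c1(1), of j F V D m] c1(3) F_deg V_deg Suc.prems
      by auto
    ultimately show ?case by blast
  qed
  from this[of n] show ?thesis by simp
qed

section \<open>Newton interpolation and alternants\<close>

text \<open>\<open>hsym d K y\<close> is the complete homogeneous symmetric polynomial \<open>h\<^sub>d(y 0, \<dots>, y (K - 1))\<close>.\<close>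
fun hsym :: "nat \<Rightarrow> nat \<Rightarrow> (nat \<Rightarrow> complex) \<Rightarrow> complex" where
  "hsym 0 K y = 1"
| "hsym (Suc d) 0 y = 0"
| "hsym (Suc d) (Suc K) y = hsym (Suc d) K y + y K * hsym d (Suc K) y"

lemma hsym_upd_ge: "K \<le> j \<Longrightarrow> hsym d K (y(j := v)) = hsym d K y"
  by (induction d K y rule: hsym.induct) auto

lemma hsym_one_var: "hsym d (Suc 0) y = y 0 ^ d"
  by (induction d) auto

lemma hsym_no_vars: "hsym d 0 y = (if d = 0 then 1 else 0)"
  by (cases d) auto

lemma mpoly_fun_hsym: "K \<le> n \<Longrightarrow> mpoly_fun n (hsym d K)"
proof (induction K arbitrary: d)
  case 0
  show ?case unfolding hsym_no_vars by (rule mpoly_fun_const)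
next
  case (Suc K)
  note fewer_vars = Suc.IH
  show ?case
  proof (induction d)
    case 0
    show ?case using mpoly_fun_const[of n 1] by simp
  next
    case (Suc d)
    have "mpoly_fun n (\<lambda>y. hsym (Suc d) K y + y K * hsym d (Suc K) y)"
      using Suc.IH fewer_vars \<open>Suc K \<le> n\<close> by (intro mpoly_fun_add mpoly_fun_mult mpoly_fun_var) auto
    then show ?case by simp
  qed
qed

declare hsym.simps(3)[simp del]

lemma hsym_upd_last:
  "hsym (Suc d) (Suc K) (y(K := t)) - hsym (Suc d) (Suc K) y
     = (t - y K) * hsym d (Suc (Suc K)) (y(Suc K := t))"
proof (induction d)
  case 0
  have "hsym (Suc 0) K (y(K := t)) = hsym (Suc 0) K y" by (rule hsym_upd_ge) simp
  then have upd: "hsym (Suc 0) (Suc K) (y(K := t)) = hsym (Suc 0) K y + t"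
    by (simp only: hsym.simps(1,3) fun_upd_same mult_1_right)
  have "hsym (Suc 0) (Suc K) y = hsym (Suc 0) K y + y K" by (simp add: hsym.simps(3))
  then show ?case by (simp only: upd hsym.simps(1)) simp
next
  case (Suc d)
  have e1: "hsym (Suc (Suc d)) (Suc K) (y(K := t))
      = hsym (Suc (Suc d)) K y + t * hsym (Suc d) (Suc K) (y(K := t))"
    by (simp add: hsym_upd_ge hsym.simps(3))
  have e2: "hsym (Suc (Suc d)) (Suc K) y = hsym (Suc (Suc d)) K y + y K * hsym (Suc d) (Suc K) y"
    by (simp add: hsym.simps(3))
  have e3: "hsym (Suc d) (Suc (Suc K)) (y(Suc K := t))
      = hsym (Suc d) (Suc K) y + t * hsym d (Suc (Suc K)) (y(Suc K := t))"
    by (simp add: hsym_upd_ge hsym.simps(3))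
  have IH: "hsym (Suc d) (Suc K) (y(K := t))
      = hsym (Suc d) (Suc K) y + (t - y K) * hsym d (Suc (Suc K)) (y(Suc K := t))"
    using Suc.IH by (simp only: diff_eq_eq add.commute)
  show ?case unfolding e1 e2 e3 IH by (simp add: algebra_simps)
qed

lemma power_newton_form:
  "t ^ N = (\<Sum>k<K. if k \<le> N then (\<Prod>l<k. t - y l) * hsym (N - k) (Suc k) y else 0)
     + (if K \<le> N then (\<Prod>l<K. t - y l) * hsym (N - K) (Suc K) (y(K := t)) else 0)"
proof (induction K)
  case 0
  then show ?case by (simp add: hsym_one_var)
next
  case (Suc K)
  have "(if K \<le> N then (\<Prod>l<K. t - y l) * hsym (N - K) (Suc K) (y(K := t)) else 0)
    = (if K \<le> N then (\<Prod>l<K. t - y l) * hsym (N - K) (Suc K) y else 0)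
      + (if Suc K \<le> N then (\<Prod>l<Suc K. t - y l) * hsym (N - Suc K) (Suc (Suc K)) (y(Suc K := t)) else 0)"
  proof (cases "K < N")
    case True
    then obtain d where d: "N - K = Suc d" "N - Suc K = d" by (metis Suc_diff_Suc)
    have "hsym (Suc d) (Suc K) (y(K := t))
        = hsym (Suc d) (Suc K) y + (t - y K) * hsym d (Suc (Suc K)) (y(Suc K := t))"
      using hsym_upd_last[of d K y t] by (simp add: algebra_simps)
    then show ?thesis using True d by (simp add: ring_distribs mult.assoc)
  qed auto
  then show ?case using Suc by simp
qed

text \<open>The divided difference \<open>p[y 0, \<dots>, y k]\<close>.\<close>
definition divdiff :: "complex poly \<Rightarrow> nat \<Rightarrow> (nat \<Rightarrow> complex) \<Rightarrow> complex" where
  "divdiff p k y = (\<Sum>N\<le>degree p. coeff p N * (if k \<le> N then hsym (N - k) (Suc k) y else 0))"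

lemma power_newton_form_at_node:
  assumes "i < K"
  shows "y i ^ N = (\<Sum>k<K. if k \<le> N then (\<Prod>l<k. y i - y l) * hsym (N - k) (Suc k) y else 0)"
proof -
  have "(\<Prod>l<K. y i - y l) = 0" using assms by (intro prod_zero) auto
  then show ?thesis using power_newton_form[where t="y i" and N=N and K=K and y=y] by simp
qed

lemma poly_newton_form:
  assumes "i < K"
  shows "poly p (y i) = (\<Sum>k<K. (\<Prod>l<k. y i - y l) * divdiff p k y)"
proof -
  have "poly p (y i) = (\<Sum>N\<le>degree p. coeff p N * y i ^ N)" by (simp add: poly_altdef)
  also have "\<dots> = (\<Sum>N\<le>degree p. \<Sum>k<K.
      coeff p N * (if k \<le> N then (\<Prod>l<k. y i - y l) * hsym (N - k) (Suc k) y else 0))"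
    by (subst power_newton_form_at_node[OF assms]) (simp add: sum_distrib_left)
  also have "\<dots> = (\<Sum>k<K. \<Sum>N\<le>degree p.
      coeff p N * (if k \<le> N then (\<Prod>l<k. y i - y l) * hsym (N - k) (Suc k) y else 0))"
    by (rule sum.swap)
  also have "\<dots> = (\<Sum>k<K. (\<Prod>l<k. y i - y l) * divdiff p k y)"
    unfolding divdiff_def sum_distrib_left by (intro sum.cong refl) (auto simp: algebra_simps)
  finally show ?thesis .
qed

lemma divdiff_above_degree: "degree p < k \<Longrightarrow> divdiff p k y = 0"
  unfolding divdiff_def by (intro sum.neutral) auto

lemma divdiff_degree: "divdiff p (degree p) y = lead_coeff p"
proof -
  have "divdiff p (degree p) y = (\<Sum>N\<in>{degree p}.
      coeff p N * (if degree p \<le> N then hsym (N - degree p) (Suc (degree p)) y else 0))"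
    unfolding divdiff_def by (rule sum.mono_neutral_right) auto
  then show ?thesis by simp
qed

lemma mpoly_fun_divdiff: "k < n \<Longrightarrow> mpoly_fun n (divdiff p k)"
  unfolding divdiff_def by (intro mpoly_fun_sum mpoly_fun_mult mpoly_fun_const mpoly_fun_if mpoly_fun_hsym) auto

definition alternant :: "(nat \<Rightarrow> complex poly) \<Rightarrow> (nat \<Rightarrow> complex) \<Rightarrow> nat \<Rightarrow> complex mat" where
  "alternant p y M = mat M M (\<lambda>(i, j). poly (p j) (y i))"

definition newton_mat :: "(nat \<Rightarrow> complex) \<Rightarrow> nat \<Rightarrow> complex mat" where
  "newton_mat y M = mat M M (\<lambda>(i, k). \<Prod>l<k. y i - y l)"

definition divdiff_mat :: "(nat \<Rightarrow> complex poly) \<Rightarrow> (nat \<Rightarrow> complex) \<Rightarrow> nat \<Rightarrow> complex mat" where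
  "divdiff_mat p y M = mat M M (\<lambda>(k, j). divdiff (p j) k y)"

definition exchange_mat :: "nat \<Rightarrow> complex mat" where
  "exchange_mat M = mat M M (\<lambda>(l, j). if l + j = M - 1 then 1 else 0)"

definition vandermonde :: "nat \<Rightarrow> (nat \<Rightarrow> complex) \<Rightarrow> complex" where
  "vandermonde M y = (\<Prod>a<M. \<Prod>l<a. y a - y l)"

lemma alternant_carrier [simp]: "alternant p y M \<in> carrier_mat M M"
  and newton_mat_carrier [simp]: "newton_mat y M \<in> carrier_mat M M"
  and divdiff_mat_carrier [simp]: "divdiff_mat p y M \<in> carrier_mat M M"
  and exchange_mat_carrier [simp]: "exchange_mat M \<in> carrier_mat M M"
  by (simp_all add: alternant_def newton_mat_def divdiff_mat_def exchange_mat_def)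

lemma alternant_eq_newton_mat_mult: "alternant p y M = newton_mat y M * divdiff_mat p y M"
proof (rule eq_matI)
  fix i j assume "i < dim_row (newton_mat y M * divdiff_mat p y M)"
    "j < dim_col (newton_mat y M * divdiff_mat p y M)"
  then have i: "i < M" and j: "j < M" by (auto simp: newton_mat_def divdiff_mat_def)
  have "(newton_mat y M * divdiff_mat p y M) $$ (i, j) = (\<Sum>k<M. (\<Prod>l<k. y i - y l) * divdiff (p j) k y)"
    using i j by (simp add: newton_mat_def divdiff_mat_def scalar_prod_def atLeast0LessThan)
  also have "\<dots> = poly (p j) (y i)" using poly_newton_form[OF i] by simp
  finally show "alternant p y M $$ (i, j) = (newton_mat y M * divdiff_mat p y M) $$ (i, j)"
    using i j by (simp add: alternant_def)
qed (auto simp: alternant_def newton_mat_def divdiff_mat_def)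

lemma det_newton_mat: "det (newton_mat y M) = vandermonde M y"
proof -
  have "det (newton_mat y M) = prod_list (diag_mat (newton_mat y M))"
    by (rule det_lower_triangular[of M]) (auto simp: newton_mat_def intro!: prod_zero)
  also have "\<dots> = vandermonde M y"
    by (simp add: diag_mat_def newton_mat_def vandermonde_def prod.distinct_set_conv_list[symmetric]
        atLeast0LessThan)
  finally show ?thesis .
qed

lemma alternant_reverse_columns: "alternant p y M = alternant (\<lambda>j. p (M - 1 - j)) y M * exchange_mat M"
proof (rule eq_matI)
  fix i j assume "i < dim_row (alternant (\<lambda>j. p (M - 1 - j)) y M * exchange_mat M)"
    "j < dim_col (alternant (\<lambda>j. p (M - 1 - j)) y M * exchange_mat M)"
  then have i: "i < M" and j: "j < M" by (auto simp: alternant_def exchange_mat_def)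
  have "(alternant (\<lambda>j. p (M - 1 - j)) y M * exchange_mat M) $$ (i, j)
      = (\<Sum>l\<in>{0..<M}. poly (p (M - 1 - l)) (y i) * (if l + j = M - 1 then 1 else 0))"
    using i j by (simp add: alternant_def exchange_mat_def scalar_prod_def)
  also have "\<dots> = (\<Sum>l\<in>{0..<M}. if l = M - 1 - j then poly (p j) (y i) else 0)"
    using j by (intro sum.cong refl) auto
  also have "\<dots> = poly (p j) (y i)" using j by (subst sum.delta) auto
  finally show "alternant p y M $$ (i, j) = (alternant (\<lambda>j. p (M - 1 - j)) y M * exchange_mat M) $$ (i, j)"
    using i j by (simp add: alternant_def)
qed (auto simp: alternant_def exchange_mat_def)

lemma det_alternant:
  "det (alternant p y M)
     = vandermonde M y * det (exchange_mat M) * det (divdiff_mat (\<lambda>j. p (M - 1 - j)) y M)"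
proof -
  have "det (alternant p y M) = det (alternant (\<lambda>j. p (M - 1 - j)) y M) * det (exchange_mat M)"
    by (subst alternant_reverse_columns) (rule det_mult[OF alternant_carrier exchange_mat_carrier])
  also have "det (alternant (\<lambda>j. p (M - 1 - j)) y M)
      = vandermonde M y * det (divdiff_mat (\<lambda>j. p (M - 1 - j)) y M)"
    by (subst alternant_eq_newton_mat_mult)
      (simp add: det_mult[OF newton_mat_carrier divdiff_mat_carrier] det_newton_mat)
  finally show ?thesis by simp
qed

lemma det_divdiff_mat_monic:
  assumes "\<And>j. j < M \<Longrightarrow> degree (q j) = j \<and> coeff (q j) j = 1"
  shows "det (divdiff_mat q y M) = 1"
proof -
  have "det (divdiff_mat q y M) = prod_list (diag_mat (divdiff_mat q y M))"
    by (rule det_upper_triangular[of _ M])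
      (auto simp: upper_triangular_def divdiff_mat_def assms intro!: divdiff_above_degree)
  also have "\<dots> = (\<Prod>i<M. divdiff (q i) i y)"
    by (simp add: diag_mat_def divdiff_mat_def prod.distinct_set_conv_list[symmetric] atLeast0LessThan)
  also have "\<dots> = 1" using assms divdiff_degree by (metis (no_types, lifting) lessThan_iff prod.neutral)
  finally show ?thesis .
qed

lemma vandermonde_cong: "(\<And>l. l < M \<Longrightarrow> y l = y' l) \<Longrightarrow> vandermonde M y = vandermonde M y'"
  unfolding vandermonde_def by (intro prod.cong refl) auto

lemma vandermonde_poly_in_var:
  assumes "i < M"
  shows "\<exists>\<kappa> q. degree q = M - 1 \<and> (\<forall>t. vandermonde M (y(i := t)) = \<kappa> * poly q t)"
proof -
  have "\<exists>\<kappa> q. q \<noteq> 0 \<and> degree q = M - 1 \<and> (\<forall>t. vandermonde M (y(i := t)) = \<kappa> * poly q t)"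
    using assms
  proof (induction M)
    case (Suc M)
    have split: "vandermonde (Suc M) y' = vandermonde M y' * (\<Prod>l<M. y' M - y' l)" for y'
      by (simp add: vandermonde_def)
    show ?case
    proof (cases "i < M")
      case True
      obtain \<kappa> q where q: "q \<noteq> 0" "degree q = M - 1" "\<And>t. vandermonde M (y(i := t)) = \<kappa> * poly q t"
        using Suc.IH[OF True] by blast
      define \<kappa>' where "\<kappa>' = (\<Prod>l\<in>{..<M}-{i}. y M - y l)"
      have last_row: "(\<Prod>l<M. (y(i := t)) M - (y(i := t)) l) = \<kappa>' * poly [:y M, -1:] t" for t
      proof -
        have "(\<Prod>l<M. (y(i := t)) M - (y(i := t)) l)
            = (y M - t) * (\<Prod>l\<in>{..<M}-{i}. (y(i := t)) M - (y(i := t)) l)"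
          using True by (subst prod.remove[of _ i]) auto
        also have "(\<Prod>l\<in>{..<M}-{i}. (y(i := t)) M - (y(i := t)) l) = \<kappa>'"
          unfolding \<kappa>'_def using True by (intro prod.cong refl) auto
        finally show ?thesis by (simp add: algebra_simps)
      qed
      have lin: "[:y M, -1:] \<noteq> 0" "degree [:y M, -1:] = 1" by auto
      show ?thesis
      proof (intro exI conjI allI)
        show "q * [:y M, -1:] \<noteq> 0" using q(1) lin(1) by (rule no_zero_divisors)
        show "degree (q * [:y M, -1:]) = Suc M - 1"
          using degree_mult_eq[OF q(1) lin(1)] q(2) lin(2) True by simp
        show "vandermonde (Suc M) (y(i := t)) = (\<kappa> * \<kappa>') * poly (q * [:y M, -1:]) t" for t
          unfolding split q(3) last_row by (simp add: algebra_simps)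
      qed
    next
      case False
      then have iM: "i = M" using Suc.prems by simp
      define q where "q = (\<Prod>l<M. [:- y l, 1:])"
      have q: "q \<noteq> 0" "degree q = Suc M - 1" unfolding q_def by (auto simp: degree_prod_eq_sum_degree)
      have "vandermonde (Suc M) (y(i := t)) = vandermonde M y * poly q t" for t
      proof -
        have "vandermonde M (y(i := t)) = vandermonde M y" using iM by (intro vandermonde_cong) auto
        moreover have "(\<Prod>l<M. (y(i := t)) M - (y(i := t)) l) = poly q t"
          unfolding q_def poly_prod using iM by (intro prod.cong refl) auto
        ultimately show ?thesis unfolding split by simp
      qed
      with q show ?thesis by blast
    qed
  qed simp
  then show ?thesis by blast
qed

lemma det_alternant_poly_in_var:
  assumes i: "i < M" and deg: "\<And>j. j < M \<Longrightarrow> degree (p j) \<le> D"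
  shows "\<exists>pF. (\<forall>t. det (alternant p (y(i := t)) M) = poly pF t) \<and> degree pF \<le> D"
proof -
  define pF where "pF = (\<Sum>j<M. smult (cofactor (alternant p y M) i j) (p j))"
  have minor: "mat_delete (alternant p (y(i := t)) M) i j = mat_delete (alternant p y M) i j" for t j
    unfolding mat_delete_def alternant_def using i by (intro eq_matI) auto
  have "det (alternant p (y(i := t)) M) = poly pF t" for t
  proof -
    have "det (alternant p (y(i := t)) M)
        = (\<Sum>j<M. alternant p (y(i := t)) M $$ (i, j) * cofactor (alternant p (y(i := t)) M) i j)"
      by (rule laplace_expansion_row[OF alternant_carrier i])
    also have "\<dots> = (\<Sum>j<M. poly (p j) t * cofactor (alternant p y M) i j)"
      using i by (intro sum.cong refl) (simp only: cofactor_def minor, simp add: alternant_def)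
    also have "\<dots> = poly pF t" unfolding pF_def poly_sum by (simp add: algebra_simps)
    finally show ?thesis .
  qed
  moreover have "degree pF \<le> D" unfolding pF_def
    by (intro degree_sum_le) (auto intro: order.trans[OF degree_smult_le] deg)
  ultimately show ?thesis by blast
qed

text \<open>In the odd case the last row of the alternant is evaluated at the constant node \<open>z + 1/z\<close>:
  only the first \<open>nv\<close> nodes are variables.\<close>
definition pad_vars :: "nat \<Rightarrow> (nat \<Rightarrow> complex) \<Rightarrow> (nat \<Rightarrow> complex) \<Rightarrow> nat \<Rightarrow> complex" where
  "pad_vars nv w y = (\<lambda>i. if i < nv then y i else w i)"

lemma pad_vars_upd: "i < nv \<Longrightarrow> pad_vars nv w (y(i := t)) = (pad_vars nv w y)(i := t)"
  unfolding pad_vars_def by auto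

lemma mpoly_fun_pad_vars: "mpoly_fun nv (\<lambda>y. pad_vars nv w y i)"
  by (cases "i < nv") (simp_all add: pad_vars_def mpoly_fun_var mpoly_fun_const)

lemma alternant_factor_mpoly:
  assumes deg: "\<And>j. j < M \<Longrightarrow> degree (p j) \<le> D" and nv: "nv \<le> M"
  shows "\<exists>c. is_mpoly nv c \<and> (\<forall>a. c a \<noteq> 0 \<longrightarrow> (\<forall>i<nv. a i \<le> D - (M - 1))) \<and>
     (\<forall>y. det (alternant p (pad_vars nv w y) M)
           = vandermonde M (pad_vars nv w y) * det (exchange_mat M) * mpoly_eval nv c y)"
proof -
  define q where "q = (\<lambda>j. p (M - 1 - j))"
  have "mpoly_fun M (\<lambda>y. det (divdiff_mat q y M))"
    unfolding divdiff_mat_def by (rule mpoly_fun_det) (auto intro: mpoly_fun_divdiff)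
  then have "mpoly_fun nv (\<lambda>y. det (divdiff_mat q (pad_vars nv w y) M))"
    by (rule mpoly_fun_comp) (rule mpoly_fun_pad_vars)
  then obtain c0 where c0: "is_mpoly nv c0"
    "\<And>y. det (divdiff_mat q (pad_vars nv w y) M) = mpoly_eval nv c0 y"
    unfolding mpoly_fun_def by blast
  define F where "F = (\<lambda>y. det (alternant p (pad_vars nv w y) M))"
  define V where "V = (\<lambda>y. vandermonde M (pad_vars nv w y) * det (exchange_mat M))"
  have F_eq: "F y = V y * mpoly_eval nv c0 y" for y
    unfolding F_def V_def det_alternant c0(2)[symmetric] q_def by simp
  have F_deg: "\<exists>pF. (\<forall>t. F (y(i := t)) = poly pF t) \<and> degree pF \<le> D" if "i < nv" for i y
    unfolding F_def pad_vars_upd[OF that] using det_alternant_poly_in_var that nv deg by simp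
  have V_deg: "\<exists>\<kappa> q. degree q = M - 1 \<and> (\<forall>t. V (y(i := t)) = \<kappa> * poly q t)" if "i < nv" for i y
  proof -
    have "i < M" using that nv by simp
    then obtain \<kappa> q where "degree q = M - 1" "\<And>t. vandermonde M ((pad_vars nv w y)(i := t)) = \<kappa> * poly q t"
      using vandermonde_poly_in_var[of i M "pad_vars nv w y"] by auto
    then show ?thesis unfolding V_def pad_vars_upd[OF that]
      by (intro exI[of _ "\<kappa> * det (exchange_mat M)"] exI[of _ q]) (simp add: algebra_simps)
  qed
  from mpoly_quotient_degree_le[OF c0(1) F_eq F_deg V_deg] show ?thesis
    unfolding F_def V_def by (simp add: algebra_simps)
qed

section \<open>Chebyshev polynomials and the symplectic bialternants\<close>

text \<open>\<open>chebU k\<close> is the Chebyshev polynomial of the second kind in the variable \<open>2 cos \<theta>\<close>, i.e.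
  \<open>U\<^sub>k(y/2)\<close>; \<open>chebU_pred k\<close> is \<open>U\<^sub>k\<^sub>-\<^sub>1(y/2)\<close> with \<open>U\<^sub>-\<^sub>1 = 0\<close>.\<close>
fun chebU :: "nat \<Rightarrow> complex poly" where
  "chebU 0 = 1"
| "chebU (Suc 0) = [:0, 1:]"
| "chebU (Suc (Suc k)) = [:0, 1:] * chebU (Suc k) - chebU k"

definition chebU_pred :: "nat \<Rightarrow> complex poly" where
  "chebU_pred k = (case k of 0 \<Rightarrow> 0 | Suc k' \<Rightarrow> chebU k')"

definition odd_symp_poly :: "complex \<Rightarrow> nat \<Rightarrow> complex poly" where
  "odd_symp_poly z k = chebU k - smult (inverse z) (chebU_pred k)"

lemma chebU_pred_Suc [simp]: "chebU_pred (Suc k) = chebU k"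
  by (simp add: chebU_pred_def)

lemma poly_chebU_sym:
  assumes ab: "a * b = (1::complex)"
  shows "(a - b) * poly (chebU k) (a + b) = a ^ (k + 1) - b ^ (k + 1)"
proof (induction k rule: chebU.induct)
  case (3 k)
  have ba: "b * a ^ Suc (Suc k) = a ^ Suc k" and ab': "a * b ^ Suc (Suc k) = b ^ Suc k"
    using ab by (simp_all add: algebra_simps)
  have "(a - b) * poly (chebU (Suc (Suc k))) (a + b)
      = (a + b) * ((a - b) * poly (chebU (Suc k)) (a + b)) - (a - b) * poly (chebU k) (a + b)"
    by (simp add: algebra_simps)
  also have "\<dots> = (a + b) * (a ^ Suc (Suc k) - b ^ Suc (Suc k)) - (a ^ Suc k - b ^ Suc k)"
    using 3 by simp
  also have "\<dots> = a * a ^ Suc (Suc k) - b * b ^ Suc (Suc k)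
      + (b * a ^ Suc (Suc k) - a * b ^ Suc (Suc k)) - (a ^ Suc k - b ^ Suc k)"
    by (simp add: algebra_simps)
  finally show ?case unfolding ba ab' by simp
qed (simp_all add: algebra_simps power2_eq_square)

lemma poly_chebU_pred_sym:
  assumes "a * b = (1::complex)"
  shows "(a - b) * poly (chebU_pred k) (a + b) = a ^ k - b ^ k"
  using poly_chebU_sym[OF assms, of "k - 1"] by (cases k) (auto simp: chebU_pred_def)

lemma poly_odd_symp_poly_sym:
  assumes "a * b = (1::complex)"
  shows "(a - b) * poly (odd_symp_poly z k) (a + b) = (a ^ (k + 1) - b ^ (k + 1)) - inverse z * (a ^ k - b ^ k)"
proof -
  have "(a - b) * poly (odd_symp_poly z k) (a + b)
      = (a - b) * poly (chebU k) (a + b) - inverse z * ((a - b) * poly (chebU_pred k) (a + b))"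
    by (simp add: odd_symp_poly_def algebra_simps)
  then show ?thesis using poly_chebU_sym[OF assms, of k] poly_chebU_pred_sym[OF assms, of k] by simp
qed

lemma poly_chebU_at_inverse_sum:
  assumes z: "z \<noteq> 0"
  shows "poly (chebU k) (z + inverse z) = z ^ k + inverse z * poly (chebU_pred k) (z + inverse z)"
proof (induction k rule: chebU.induct)
  case (3 k)
  define u where "u = poly (chebU k) (z + inverse z)"
  define u' where "u' = poly (chebU (Suc k)) (z + inverse z)"
  have "u' = z ^ Suc k + inverse z * u" using 3 by (simp add: u_def u'_def)
  then have "z * u' = z ^ Suc (Suc k) + u" using z by (simp add: algebra_simps)
  moreover have "poly (chebU (Suc (Suc k))) (z + inverse z) = z * u' + inverse z * u' - u"
    by (simp add: u_def u'_def algebra_simps)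
  ultimately show ?case by (simp add: u'_def)
qed (simp_all add: chebU_pred_def)

lemma poly_odd_symp_poly_at_inverse_sum: "z \<noteq> 0 \<Longrightarrow> poly (odd_symp_poly z k) (z + inverse z) = z ^ k"
  using poly_chebU_at_inverse_sum[of z k] by (simp add: odd_symp_poly_def)

lemma degree_chebU: "degree (chebU k) = k" and coeff_chebU_self: "coeff (chebU k) k = 1"
proof -
  have "degree (chebU k) \<le> k \<and> coeff (chebU k) k = 1"
  proof (induction k rule: chebU.induct)
    case (3 k)
    have "degree ([:0, 1:] * chebU (Suc k)) \<le> Suc (Suc k)"
      using degree_mult_le[of "[:0, 1:]" "chebU (Suc k)"] 3 by simp
    then have "degree (chebU (Suc (Suc k))) \<le> Suc (Suc k)"
      using degree_diff_le[of _ "Suc (Suc k)" "chebU k"] 3 by simp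
    moreover have "coeff (chebU (Suc (Suc k))) (Suc (Suc k)) = 1"
      using 3 by (simp add: coeff_eq_0)
    ultimately show ?case by simp
  qed simp_all
  moreover from this have "k \<le> degree (chebU k)" by (intro le_degree) simp
  ultimately show "degree (chebU k) = k" "coeff (chebU k) k = 1" by simp_all
qed

lemma degree_chebU_pred_le: "degree (chebU_pred k) \<le> k - 1"
  by (cases k) (auto simp: degree_chebU chebU_pred_def)

lemma degree_odd_symp_poly: "degree (odd_symp_poly z k) = k"
  and coeff_odd_symp_poly_self: "coeff (odd_symp_poly z k) k = 1"
proof -
  have "coeff (chebU_pred k) k = 0"
    using degree_chebU_pred_le[of k] by (cases k) (auto simp: chebU_pred_def intro: coeff_eq_0)
  then have lead: "coeff (odd_symp_poly z k) k = 1"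
    using coeff_chebU_self[of k] by (simp add: odd_symp_poly_def)
  have "degree (odd_symp_poly z k) \<le> k"
    unfolding odd_symp_poly_def using degree_chebU[of k] degree_chebU_pred_le[of k]
    by (intro degree_diff_le) (auto intro: order.trans[OF degree_smult_le])
  moreover have "k \<le> degree (odd_symp_poly z k)" using lead by (intro le_degree) simp
  ultimately show "degree (odd_symp_poly z k) = k" by simp
  show "coeff (odd_symp_poly z k) k = 1" by (rule lead)
qed

lemma det_scale_rows:
  assumes B: "B \<in> carrier_mat M M"
  shows "det (mat M M (\<lambda>(i, j). s i * B $$ (i, j))) = (\<Prod>i<M. s i) * det B"
proof -
  have "mat M M (\<lambda>(i, j). s i * B $$ (i, j)) = mat\<^sub>r M M (\<lambda>i. s i \<cdot>\<^sub>v row B i)"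
    using B by (intro eq_matI) auto
  moreover have "mat\<^sub>r M M (\<lambda>i. row B i) = B"
    using B by (intro eq_matI) auto
  ultimately show ?thesis
    using det_rows_mul[of "\<lambda>i. row B i" M s] B by (simp add: atLeast0LessThan)
qed

text \<open>The monic columns of degrees \<open>M - 1, \<dots>, 0\<close> make \<open>det (alternant q)\<close> the Vandermonde
  determinant up to sign.\<close>
lemma alternant_quotient_mpoly:
  assumes deg: "\<And>j. j < M \<Longrightarrow> degree (p j) \<le> D"
    and monic: "\<And>j. j < M \<Longrightarrow> degree (q j) = M - 1 - j \<and> coeff (q j) (M - 1 - j) = 1"
    and nv: "nv \<le> M"
  shows "\<exists>c. is_mpoly nv c \<and> (\<forall>a. c a \<noteq> 0 \<longrightarrow> (\<forall>i<nv. a i \<le> D - (M - 1))) \<and>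
     (\<forall>y. det (alternant q (pad_vars nv w y) M) \<noteq> 0 \<longrightarrow>
        det (alternant p (pad_vars nv w y) M) / det (alternant q (pad_vars nv w y) M) = mpoly_eval nv c y)"
proof -
  obtain c where c: "is_mpoly nv c" "\<forall>a. c a \<noteq> 0 \<longrightarrow> (\<forall>i<nv. a i \<le> D - (M - 1))"
    "\<And>y. det (alternant p (pad_vars nv w y) M)
           = vandermonde M (pad_vars nv w y) * det (exchange_mat M) * mpoly_eval nv c y"
    using alternant_factor_mpoly[of M p D nv w] deg nv by blast
  have "degree (q (M - 1 - j)) = j \<and> coeff (q (M - 1 - j)) j = 1" if "j < M" for j
    using monic[of "M - 1 - j"] that by (simp add: Suc_diff_Suc)
  then have "det (divdiff_mat (\<lambda>j. q (M - 1 - j)) Y M) = 1" for Y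
    by (rule det_divdiff_mat_monic)
  then have "det (alternant q Y M) = vandermonde M Y * det (exchange_mat M)" for Y
    unfolding det_alternant by simp
  then show ?thesis using c by auto
qed

definition joukowski :: "(nat \<Rightarrow> complex) \<Rightarrow> nat \<Rightarrow> complex" where
  "joukowski x i = x i + inverse (x i)"

definition row_factor :: "nat \<Rightarrow> (nat \<Rightarrow> complex) \<Rightarrow> nat \<Rightarrow> complex" where
  "row_factor n x i = (if i < n then x i - inverse (x i) else 1)"

lemma odd_symp_mat_eq_scaled_alternant:
  assumes x: "\<forall>i<n. x i \<noteq> 0" and z: "z \<noteq> 0"
  shows "odd_symp_mat n \<mu> x z = mat (n + 1) (n + 1) (\<lambda>(i, j). row_factor n x i *
     alternant (\<lambda>j. odd_symp_poly z (\<mu> j + n - j)) (pad_vars n (\<lambda>_. z + inverse z) (joukowski x)) (n + 1)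
       $$ (i, j))"
proof (rule eq_matI)
  fix i j assume "i < dim_row (mat (n + 1) (n + 1) (\<lambda>(i, j). row_factor n x i *
     alternant (\<lambda>j. odd_symp_poly z (\<mu> j + n - j)) (pad_vars n (\<lambda>_. z + inverse z) (joukowski x)) (n + 1)
       $$ (i, j)))"
    "j < dim_col (mat (n + 1) (n + 1) (\<lambda>(i, j). row_factor n x i *
     alternant (\<lambda>j. odd_symp_poly z (\<mu> j + n - j)) (pad_vars n (\<lambda>_. z + inverse z) (joukowski x)) (n + 1)
       $$ (i, j)))"
  then have i: "i < n + 1" and j: "j < n + 1" by auto
  define e where "e = \<mu> j + n - j"
  have e1: "Suc (\<mu> j + n) - j = Suc e" using j by (simp add: e_def)
  show "odd_symp_mat n \<mu> x z $$ (i, j) = mat (n + 1) (n + 1) (\<lambda>(i, j). row_factor n x i *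
     alternant (\<lambda>j. odd_symp_poly z (\<mu> j + n - j)) (pad_vars n (\<lambda>_. z + inverse z) (joukowski x)) (n + 1)
       $$ (i, j)) $$ (i, j)"
  proof (cases "i < n")
    case True
    have "x i * inverse (x i) = 1" using x True by simp
    from poly_odd_symp_poly_sym[OF this, of z e] show ?thesis using i j True
      by (simp add: odd_symp_mat_def alternant_def pad_vars_def joukowski_def row_factor_def e1
          e_def[symmetric])
  next
    case False
    then have "i = n" using i by simp
    then show ?thesis using i j poly_odd_symp_poly_at_inverse_sum[OF z, of e]
      by (simp add: odd_symp_mat_def alternant_def pad_vars_def row_factor_def e_def[symmetric])
  qed
qed (auto simp: odd_symp_mat_def)

lemma even_symp_mat_eq_scaled_alternant:
  assumes x: "\<forall>i<n. x i \<noteq> 0"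
  shows "even_symp_mat n \<mu> x = mat n n (\<lambda>(i, j). row_factor n x i *
     alternant (\<lambda>j. chebU_pred (\<mu> j + n - j)) (pad_vars n w (joukowski x)) n $$ (i, j))"
proof (rule eq_matI)
  fix i j assume "i < dim_row (mat n n (\<lambda>(i, j). row_factor n x i *
     alternant (\<lambda>j. chebU_pred (\<mu> j + n - j)) (pad_vars n w (joukowski x)) n $$ (i, j)))"
    "j < dim_col (mat n n (\<lambda>(i, j). row_factor n x i *
     alternant (\<lambda>j. chebU_pred (\<mu> j + n - j)) (pad_vars n w (joukowski x)) n $$ (i, j)))"
  then have i: "i < n" and j: "j < n" by auto
  have "x i * inverse (x i) = 1" using x i by simp
  from poly_chebU_pred_sym[OF this, of "\<mu> j + n - j"]
  show "even_symp_mat n \<mu> x $$ (i, j) = mat n n (\<lambda>(i, j). row_factor n x i *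
     alternant (\<lambda>j. chebU_pred (\<mu> j + n - j)) (pad_vars n w (joukowski x)) n $$ (i, j)) $$ (i, j)"
    using i j by (simp add: even_symp_mat_def alternant_def pad_vars_def joukowski_def row_factor_def)
qed (auto simp: even_symp_mat_def)

lemma Symp_odd_eq_mpoly_joukowski:
  assumes lam: "\<And>j. lam j \<le> lam 0" and z: "z \<noteq> 0"
  shows "\<exists>c. is_mpoly n c \<and> (\<forall>a. c a \<noteq> 0 \<longrightarrow> (\<forall>i<n. a i \<le> lam 0)) \<and>
     (\<forall>x. (\<forall>i<n. x i \<noteq> 0) \<and> odd_symp_den n x z \<noteq> 0 \<longrightarrow> Symp_odd n lam x z = mpoly_eval n c (joukowski x))"
proof -
  define Y where "Y = (\<lambda>x. pad_vars n (\<lambda>_. z + inverse z) (joukowski x))"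
  define p where "p = (\<lambda>j. odd_symp_poly z (lam j + n - j))"
  define q where "q = (\<lambda>j. odd_symp_poly z (0 + n - j))"
  have "degree (p j) \<le> lam 0 + n" for j
    using lam[of j] by (simp add: p_def degree_odd_symp_poly)
  moreover have "degree (q j) = n + 1 - 1 - j \<and> coeff (q j) (n + 1 - 1 - j) = 1" for j
    by (simp add: q_def degree_odd_symp_poly coeff_odd_symp_poly_self)
  ultimately obtain c where c: "is_mpoly n c"
    "\<forall>a. c a \<noteq> 0 \<longrightarrow> (\<forall>i<n. a i \<le> lam 0 + n - (n + 1 - 1))"
    "\<And>x. det (alternant q (Y x) (n + 1)) \<noteq> 0 \<Longrightarrow>
       det (alternant p (Y x) (n + 1)) / det (alternant q (Y x) (n + 1)) = mpoly_eval n c (joukowski x)"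
    using alternant_quotient_mpoly[of "n + 1" p "lam 0 + n" q n "\<lambda>_. z + inverse z"]
    unfolding Y_def by auto
  have "Symp_odd n lam x z = mpoly_eval n c (joukowski x)"
    if x: "\<forall>i<n. x i \<noteq> 0" and den: "odd_symp_den n x z \<noteq> 0" for x
  proof -
    have dets: "det (odd_symp_mat n \<mu> x z) = (\<Prod>i<n + 1. row_factor n x i) * det (alternant
        (\<lambda>j. odd_symp_poly z (\<mu> j + n - j)) (Y x) (n + 1))" for \<mu>
      unfolding odd_symp_mat_eq_scaled_alternant[OF x z] Y_def by (rule det_scale_rows) simp
    show ?thesis using den c(3)[of x] unfolding Symp_odd_def odd_symp_den_def dets p_def q_def by simp
  qed
  then show ?thesis using c(1,2) by auto
qed

lemma Symp_even_eq_mpoly_joukowski: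
  assumes lam: "\<And>j. lam j \<le> lam 0"
  shows "\<exists>c. is_mpoly n c \<and> (\<forall>a. c a \<noteq> 0 \<longrightarrow> (\<forall>i<n. a i \<le> lam 0)) \<and>
     (\<forall>x. (\<forall>i<n. x i \<noteq> 0) \<and> even_symp_den n x \<noteq> 0 \<longrightarrow> Symp_even n lam x = mpoly_eval n c (joukowski x))"
proof -
  define Y where "Y = (\<lambda>x. pad_vars n (\<lambda>_. 0) (joukowski x))"
  define p where "p = (\<lambda>j. chebU_pred (lam j + n - j))"
  define q where "q = (\<lambda>j. chebU_pred (0 + n - j))"
  have "degree (p j) \<le> lam 0 + n - 1" for j
    using lam[of j] degree_chebU_pred_le[of "lam j + n - j"] by (simp add: p_def)
  moreover have "degree (q j) = n - 1 - j \<and> coeff (q j) (n - 1 - j) = 1" if "j < n" for j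
  proof -
    have "n - j = Suc (n - 1 - j)" using that by simp
    then show ?thesis by (simp add: q_def degree_chebU coeff_chebU_self)
  qed
  ultimately obtain c where c: "is_mpoly n c" "\<forall>a. c a \<noteq> 0 \<longrightarrow> (\<forall>i<n. a i \<le> lam 0 + n - 1 - (n - 1))"
    "\<And>x. det (alternant q (Y x) n) \<noteq> 0 \<Longrightarrow>
       det (alternant p (Y x) n) / det (alternant q (Y x) n) = mpoly_eval n c (joukowski x)"
    using alternant_quotient_mpoly[of n p "lam 0 + n - 1" q n "\<lambda>_. 0"] unfolding Y_def by auto
  have "Symp_even n lam x = mpoly_eval n c (joukowski x)"
    if x: "\<forall>i<n. x i \<noteq> 0" and den: "even_symp_den n x \<noteq> 0" for x
  proof -
    have dets: "det (even_symp_mat n \<mu> x) = (\<Prod>i<n. row_factor n x i) * det (alternant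
        (\<lambda>j. chebU_pred (\<mu> j + n - j)) (Y x) n)" for \<mu>
      unfolding even_symp_mat_eq_scaled_alternant[OF x, where w="\<lambda>_. 0"] Y_def by (rule det_scale_rows) simp
    show ?thesis using den c(3)[of x] unfolding Symp_even_def even_symp_den_def dets p_def q_def by simp
  qed
  moreover have "\<forall>a. c a \<noteq> 0 \<longrightarrow> (\<forall>i<n. a i \<le> lam 0)" using c(2) by fastforce
  ultimately show ?thesis using c(1) by auto
qed

text \<open>Since \<open>x\<^sup>r (x + 1/x)\<^sup>a = x\<^sup>r\<^sup>-\<^sup>a (x\<^sup>2 + 1)\<^sup>a\<close> for \<open>a \<le> r\<close>.\<close>
lemma mpoly_joukowski_clear_denominators:
  assumes c: "is_mpoly n c" and deg: "\<forall>a. c a \<noteq> 0 \<longrightarrow> (\<forall>i<n. a i \<le> r)"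
  shows "\<exists>c'. is_mpoly n c' \<and>
    (\<forall>x. (\<forall>i<n. x i \<noteq> 0) \<longrightarrow> (\<Prod>i<n. x i) ^ r * mpoly_eval n c (joukowski x) = mpoly_eval n c' x)"
proof -
  let ?f = "\<lambda>x. \<Sum>a\<in>{a. c a \<noteq> 0}. c a * (\<Prod>i<n. x i ^ (r - a i) * (x i ^ 2 + 1) ^ a i)"
  have "mpoly_fun n ?f"
    using c unfolding is_mpoly_def
    by (intro mpoly_fun_sum mpoly_fun_mult mpoly_fun_const mpoly_fun_prod mpoly_fun_power
        mpoly_fun_add mpoly_fun_var) auto
  then obtain c' where c': "is_mpoly n c'" "\<And>x. ?f x = mpoly_eval n c' x"
    unfolding mpoly_fun_def by blast
  have "(\<Prod>i<n. x i) ^ r * mpoly_eval n c (joukowski x) = ?f x" if x: "\<forall>i<n. x i \<noteq> 0" for x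
  proof -
    have factor: "x i ^ r * joukowski x i ^ a i = x i ^ (r - a i) * (x i ^ 2 + 1) ^ a i"
      if "c a \<noteq> 0" "i < n" for a i
    proof -
      have "x i ^ r = x i ^ (r - a i) * x i ^ a i"
        using deg that by (simp add: power_add[symmetric])
      moreover have "x i ^ a i * joukowski x i ^ a i = (x i ^ 2 + 1) ^ a i"
        using x that by (simp add: joukowski_def power_mult_distrib[symmetric] algebra_simps power2_eq_square)
      ultimately show ?thesis by (simp add: mult.assoc)
    qed
    have "(\<Prod>i<n. x i) ^ r * mpoly_eval n c (joukowski x)
        = (\<Sum>a\<in>{a. c a \<noteq> 0}. c a * (\<Prod>i<n. x i ^ r * joukowski x i ^ a i))"
      unfolding mpoly_eval_def sum_distrib_left
      by (intro sum.cong refl) (simp add: prod.distrib prod_power_distrib algebra_simps)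
    also have "\<dots> = ?f x"
    proof (intro sum.cong refl)
      fix a assume "a \<in> {a. c a \<noteq> 0}"
      then show "c a * (\<Prod>i<n. x i ^ r * joukowski x i ^ a i)
          = c a * (\<Prod>i<n. x i ^ (r - a i) * (x i ^ 2 + 1) ^ a i)"
        by (simp add: factor)
    qed
    finally show ?thesis .
  qed
  then show ?thesis using c' by metis
qed

section \<open>Specialization at \<open>x\<^sub>1 = 0\<close>\<close>

lemma tendsto_power_mult_sym_diff:
  fixes e K :: nat
  assumes "e \<le> K" "0 < K"
  shows "((\<lambda>t::complex. t ^ K * (t ^ e - inverse t ^ e)) \<longlongrightarrow> (if e = K then -1 else 0)) (at 0)"
proof -
  have "((\<lambda>t::complex. t ^ (K + e) - t ^ (K - e)) \<longlongrightarrow> 0 ^ (K + e) - 0 ^ (K - e)) (at 0)"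
    by (intro tendsto_intros)
  moreover have "0 ^ (K + e) - 0 ^ (K - e) = (if e = K then -1 else (0::complex))"
    using assms by (simp add: power_0_left)
  moreover have ident: "t ^ (K + e) - t ^ (K - e) = t ^ K * (t ^ e - inverse t ^ e)" if "t \<noteq> 0" for t :: complex
  proof -
    have "t ^ K = t ^ (K - e) * t ^ e" using assms(1) by (simp add: power_add[symmetric])
    moreover have "t ^ e * inverse t ^ e = 1" using that by (simp add: power_mult_distrib[symmetric])
    ultimately show ?thesis by (simp add: right_diff_distrib power_add mult.assoc)
  qed
  moreover have "\<forall>\<^sub>F t in at (0::complex). t ^ (K + e) - t ^ (K - e) = t ^ K * (t ^ e - inverse t ^ e)"
    unfolding eventually_at_filter by (rule always_eventually) (simp add: ident)
  ultimately show ?thesis by (auto intro: Lim_transform_eventually)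
qed

lemma tendsto_det_first_row:
  fixes A :: "'a \<Rightarrow> complex mat"
  assumes car: "\<And>t. A t \<in> carrier_mat M M" and M: "0 < M"
    and row: "\<And>j. j < M \<Longrightarrow> ((\<lambda>t. f t * A t $$ (0, j)) \<longlongrightarrow> (if j = 0 then -1 else 0)) F"
    and minors: "\<And>t j. mat_delete (A t) 0 j = B j"
  shows "((\<lambda>t. f t * det (A t)) \<longlongrightarrow> - det (B 0)) F"
proof -
  have expand: "f t * det (A t) = (\<Sum>j<M. (f t * A t $$ (0, j)) * ((-1) ^ j * det (B j)))" for t
    unfolding laplace_expansion_row[OF car M] cofactor_def minors
    by (simp add: sum_distrib_left mult.assoc)
  have "((\<lambda>t. \<Sum>j<M. (f t * A t $$ (0, j)) * ((-1) ^ j * det (B j)))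
      \<longlongrightarrow> (\<Sum>j<M. (if j = 0 then -1 else 0) * ((-1) ^ j * det (B j)))) F"
    by (intro tendsto_sum tendsto_mult_right row) simp
  also have "(\<Sum>j<M. (if j = 0 then -1 else 0) * ((-1) ^ j * det (B j)))
      = (\<Sum>j<M. if j = 0 then - det (B 0) else 0)"
    by (rule sum.cong) auto
  also have "\<dots> = - det (B 0)" using M by simp
  finally show ?thesis unfolding expand .
qed

lemma odd_symp_mat_upd_delete_first_row:
  "mat_delete (odd_symp_mat n \<mu> (x(0 := t)) z) 0 j = mat_delete (odd_symp_mat n \<mu> x z) 0 j"
  unfolding mat_delete_def odd_symp_mat_def by (rule eq_matI) auto

lemma even_symp_mat_upd_delete_first_row:
  "mat_delete (even_symp_mat n \<mu> (x(0 := t))) 0 j = mat_delete (even_symp_mat n \<mu> x) 0 j"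
  unfolding mat_delete_def even_symp_mat_def by (rule eq_matI) auto

lemma odd_symp_mat_delete_00:
  assumes "n \<ge> 1"
  shows "mat_delete (odd_symp_mat n \<mu> x z) 0 0 = odd_symp_mat (n - 1) (\<lambda>j. \<mu> (Suc j)) (\<lambda>i. x (Suc i)) z"
  using assms unfolding mat_delete_def odd_symp_mat_def by (intro eq_matI) (auto simp: Suc_diff_le)

lemma even_symp_mat_delete_00:
  assumes "n \<ge> 1"
  shows "mat_delete (even_symp_mat n \<mu> x) 0 0 = even_symp_mat (n - 1) (\<lambda>j. \<mu> (Suc j)) (\<lambda>i. x (Suc i))"
  using assms unfolding mat_delete_def even_symp_mat_def by (intro eq_matI) (auto simp: Suc_diff_le)

lemma tendsto_det_odd_symp_mat_first_var:
  assumes n: "n \<ge> 1" and \<mu>: "\<And>j. \<mu> j \<le> \<mu> 0"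
  shows "((\<lambda>t. t ^ (\<mu> 0 + n + 1) * det (odd_symp_mat n \<mu> (x(0 := t)) z))
          \<longlongrightarrow> - det (odd_symp_mat (n - 1) (\<lambda>j. \<mu> (Suc j)) (\<lambda>i. x (Suc i)) z)) (at 0)"
proof -
  define K where "K = \<mu> 0 + n + 1"
  have first_row: "((\<lambda>t. t ^ K * odd_symp_mat n \<mu> (x(0 := t)) z $$ (0, j))
      \<longlongrightarrow> (if j = 0 then -1 else 0)) (at 0)" if j: "j < n + 1" for j
  proof -
    define e where "e = \<mu> j + n - j"
    have e: "e + 1 \<le> K" "e + 1 = K \<longleftrightarrow> j = 0" using \<mu>[of j] j by (auto simp: e_def K_def)
    have entry: "t ^ K * odd_symp_mat n \<mu> (x(0 := t)) z $$ (0, j)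
        = t ^ K * (t ^ (e + 1) - inverse t ^ (e + 1)) - inverse z * (t ^ K * (t ^ e - inverse t ^ e))" for t
      using j n by (simp add: odd_symp_mat_def e_def Suc_diff_le algebra_simps)
    have "((\<lambda>t. t ^ K * (t ^ (e + 1) - inverse t ^ (e + 1)) - inverse z * (t ^ K * (t ^ e - inverse t ^ e)))
        \<longlongrightarrow> (if e + 1 = K then -1 else 0) - inverse z * (if e = K then -1 else 0)) (at 0)"
      using e(1) by (intro tendsto_intros tendsto_power_mult_sym_diff) (auto simp: K_def)
    then show ?thesis unfolding entry using e by simp
  qed
  have "((\<lambda>t. t ^ K * det (odd_symp_mat n \<mu> (x(0 := t)) z))
      \<longlongrightarrow> - det (mat_delete (odd_symp_mat n \<mu> x z) 0 0)) (at 0)"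
    using first_row
    by (intro tendsto_det_first_row[where M="n + 1" and B="\<lambda>j. mat_delete (odd_symp_mat n \<mu> x z) 0 j"]
        odd_symp_mat_upd_delete_first_row) (simp_all add: odd_symp_mat_def)
  then show ?thesis unfolding odd_symp_mat_delete_00[OF n] K_def .
qed

lemma tendsto_det_even_symp_mat_first_var:
  assumes n: "n \<ge> 1" and \<mu>: "\<And>j. \<mu> j \<le> \<mu> 0"
  shows "((\<lambda>t. t ^ (\<mu> 0 + n) * det (even_symp_mat n \<mu> (x(0 := t))))
          \<longlongrightarrow> - det (even_symp_mat (n - 1) (\<lambda>j. \<mu> (Suc j)) (\<lambda>i. x (Suc i)))) (at 0)"
proof -
  define K where "K = \<mu> 0 + n"
  have first_row: "((\<lambda>t. t ^ K * even_symp_mat n \<mu> (x(0 := t)) $$ (0, j))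
      \<longlongrightarrow> (if j = 0 then -1 else 0)) (at 0)" if j: "j < n" for j
  proof -
    define e where "e = \<mu> j + n - j"
    have e: "e \<le> K" "e = K \<longleftrightarrow> j = 0" using \<mu>[of j] j by (auto simp: e_def K_def)
    have "((\<lambda>t::complex. t ^ K * (t ^ e - inverse t ^ e)) \<longlongrightarrow> (if e = K then -1 else 0)) (at 0)"
      by (rule tendsto_power_mult_sym_diff) (use e(1) n in \<open>auto simp: K_def\<close>)
    then show ?thesis using j e by (simp add: even_symp_mat_def e_def)
  qed
  have "((\<lambda>t. t ^ K * det (even_symp_mat n \<mu> (x(0 := t))))
      \<longlongrightarrow> - det (mat_delete (even_symp_mat n \<mu> x) 0 0)) (at 0)"
    using first_row n
    by (intro tendsto_det_first_row[where M=n and B="\<lambda>j. mat_delete (even_symp_mat n \<mu> x) 0 j"]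
        even_symp_mat_upd_delete_first_row) (simp_all add: even_symp_mat_def)
  then show ?thesis unfolding even_symp_mat_delete_00[OF n] K_def .
qed

text \<open>\<open>N\<close> and \<open>D\<close> have poles of order \<open>l + K\<close> and \<open>K\<close> at \<open>0\<close>; the factor \<open>t\<^sup>r\<^sup>-\<^sup>l\<close> left over
  after cancelling them makes \<open>\<Phi> 0\<close> vanish unless \<open>l = r\<close>.\<close>
lemma value_at_zero_from_limits:
  fixes \<Phi> N D :: "complex \<Rightarrow> complex"
  assumes \<Phi>: "isCont \<Phi> 0"
    and N: "((\<lambda>t. t ^ (l + K) * N t) \<longlongrightarrow> NL) (at 0)"
    and D: "((\<lambda>t. t ^ K * D t) \<longlongrightarrow> DL) (at 0)" and DL: "DL \<noteq> 0"
    and lr: "l \<le> r"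
    and eq: "\<And>t. t \<noteq> 0 \<Longrightarrow> D t \<noteq> 0 \<Longrightarrow> \<Phi> t = (t * C) ^ r * (N t / D t)"
  shows "\<Phi> 0 = (if l = r then C ^ r * (NL / DL) else 0)"
proof -
  have "\<forall>\<^sub>F t in at 0. t ^ K * D t \<noteq> 0" by (rule tendsto_imp_eventually_ne[OF D DL])
  moreover have "\<forall>\<^sub>F t in at (0::complex). t \<noteq> 0" by (simp add: eventually_at_filter)
  ultimately have "\<forall>\<^sub>F t in at 0. C ^ r * t ^ (r - l) * ((t ^ (l + K) * N t) / (t ^ K * D t)) = \<Phi> t"
  proof eventually_elim
    case (elim t)
    have "t ^ r = t ^ (r - l) * t ^ l" using lr by (simp add: power_add[symmetric])
    then show ?case using elim by (simp add: eq power_add power_mult_distrib field_simps)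
  qed
  moreover have "((\<lambda>t. C ^ r * t ^ (r - l) * ((t ^ (l + K) * N t) / (t ^ K * D t)))
      \<longlongrightarrow> C ^ r * 0 ^ (r - l) * (NL / DL)) (at 0)"
    by (intro tendsto_intros N D DL)
  ultimately have "(\<Phi> \<longlongrightarrow> C ^ r * 0 ^ (r - l) * (NL / DL)) (at 0)"
    by (auto intro: Lim_transform_eventually)
  moreover have "(\<Phi> \<longlongrightarrow> \<Phi> 0) (at 0)" using \<Phi> by (simp add: isCont_def)
  ultimately have "\<Phi> 0 = C ^ r * 0 ^ (r - l) * (NL / DL)" using tendsto_unique[OF at_neq_bot] by metis
  then show ?thesis using lr by (simp add: power_0_left)
qed

lemma prod_lessThan_upd_0:
  assumes "n \<ge> 1"
  shows "(\<Prod>i<n. (x(0 := t)) i) = t * (\<Prod>i<n - 1. x (Suc i))"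
proof -
  obtain n' where n: "n = Suc n'" using assms by (cases n) auto
  show ?thesis unfolding n by (subst prod.lessThan_Suc_shift) simp
qed

lemma Symp_odd_times_monomial_mpoly:
  assumes lam: "\<And>j. lam j \<le> lam 0" and r: "lam 0 \<le> r" and z: "z \<noteq> 0"
  shows "\<exists>c. is_mpoly n c \<and> (\<forall>x. (\<forall>i<n. x i \<noteq> 0) \<and> odd_symp_den n x z \<noteq> 0 \<longrightarrow>
           (\<Prod>i<n. x i) ^ r * Symp_odd n lam x z = mpoly_eval n c x)"
proof -
  obtain c where c: "is_mpoly n c" "\<forall>a. c a \<noteq> 0 \<longrightarrow> (\<forall>i<n. a i \<le> lam 0)"
    "\<forall>x. (\<forall>i<n. x i \<noteq> 0) \<and> odd_symp_den n x z \<noteq> 0 \<longrightarrow> Symp_odd n lam x z = mpoly_eval n c (joukowski x)"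
    using Symp_odd_eq_mpoly_joukowski[where lam=lam, OF lam z] by blast
  have "\<forall>a. c a \<noteq> 0 \<longrightarrow> (\<forall>i<n. a i \<le> r)" using c(2) r by fastforce
  from mpoly_joukowski_clear_denominators[OF c(1) this] c(3) show ?thesis by metis
qed

lemma Symp_even_times_monomial_mpoly:
  assumes lam: "\<And>j. lam j \<le> lam 0" and r: "lam 0 \<le> r"
  shows "\<exists>c. is_mpoly n c \<and> (\<forall>x. (\<forall>i<n. x i \<noteq> 0) \<and> even_symp_den n x \<noteq> 0 \<longrightarrow>
           (\<Prod>i<n. x i) ^ r * Symp_even n lam x = mpoly_eval n c x)"
proof -
  obtain c where c: "is_mpoly n c" "\<forall>a. c a \<noteq> 0 \<longrightarrow> (\<forall>i<n. a i \<le> lam 0)"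
    "\<forall>x. (\<forall>i<n. x i \<noteq> 0) \<and> even_symp_den n x \<noteq> 0 \<longrightarrow> Symp_even n lam x = mpoly_eval n c (joukowski x)"
    using Symp_even_eq_mpoly_joukowski[where lam=lam, OF lam] by blast
  have "\<forall>a. c a \<noteq> 0 \<longrightarrow> (\<forall>i<n. a i \<le> r)" using c(2) r by fastforce
  from mpoly_joukowski_clear_denominators[OF c(1) this] c(3) show ?thesis by metis
qed

lemma Symp_odd_mpoly_at_first_var_zero:
  assumes n: "n \<ge> 1" and lam: "\<And>j. lam j \<le> lam 0" and r: "lam 0 \<le> r"
    and c: "\<forall>x. (\<forall>i<n. x i \<noteq> 0) \<and> odd_symp_den n x z \<noteq> 0 \<longrightarrow>
              (\<Prod>i<n. x i) ^ r * Symp_odd n lam x z = mpoly_eval n c x"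
    and x0: "x 0 = 0" and x_nz: "\<forall>i. 1 \<le> i \<and> i < n \<longrightarrow> x i \<noteq> 0"
    and den: "odd_symp_den (n - 1) (\<lambda>i. x (Suc i)) z \<noteq> 0"
  shows "mpoly_eval n c x = (if lam 0 = r
           then (\<Prod>i<n - 1. x (Suc i)) ^ r * Symp_odd (n - 1) (\<lambda>j. lam (Suc j)) (\<lambda>i. x (Suc i)) z
           else 0)"
proof -
  let ?N = "\<lambda>t. det (odd_symp_mat n lam (x(0 := t)) z)"
  let ?D = "\<lambda>t. odd_symp_den n (x(0 := t)) z"
  have N: "((\<lambda>t. t ^ (lam 0 + (n + 1)) * ?N t)
      \<longlongrightarrow> - det (odd_symp_mat (n - 1) (\<lambda>j. lam (Suc j)) (\<lambda>i. x (Suc i)) z)) (at 0)"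
    using tendsto_det_odd_symp_mat_first_var[where \<mu>=lam, OF n lam] by (simp add: add.assoc)
  have D: "((\<lambda>t. t ^ (n + 1) * ?D t) \<longlongrightarrow> - odd_symp_den (n - 1) (\<lambda>i. x (Suc i)) z) (at 0)"
    using tendsto_det_odd_symp_mat_first_var[OF n, of "\<lambda>_. 0"] unfolding odd_symp_den_def by simp
  have "mpoly_eval n c (x(0 := t)) = (t * (\<Prod>i<n - 1. x (Suc i))) ^ r * (?N t / ?D t)"
    if "t \<noteq> 0" "?D t \<noteq> 0" for t
  proof -
    have "\<forall>i<n. (x(0 := t)) i \<noteq> 0" using that(1) x_nz by auto
    then have "(\<Prod>i<n. (x(0 := t)) i) ^ r * Symp_odd n lam (x(0 := t)) z = mpoly_eval n c (x(0 := t))"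
      using c that(2) by blast
    then show ?thesis unfolding prod_lessThan_upd_0[OF n] Symp_odd_def by (rule sym)
  qed
  from value_at_zero_from_limits[OF isCont_mpoly_eval_upd N D _ r this] den x0
  show ?thesis by (simp add: Symp_odd_def fun_upd_idem)
qed

lemma Symp_even_mpoly_at_first_var_zero:
  assumes n: "n \<ge> 1" and lam: "\<And>j. lam j \<le> lam 0" and r: "lam 0 \<le> r"
    and c: "\<forall>x. (\<forall>i<n. x i \<noteq> 0) \<and> even_symp_den n x \<noteq> 0 \<longrightarrow>
              (\<Prod>i<n. x i) ^ r * Symp_even n lam x = mpoly_eval n c x"
    and x0: "x 0 = 0" and x_nz: "\<forall>i. 1 \<le> i \<and> i < n \<longrightarrow> x i \<noteq> 0"
    and den: "even_symp_den (n - 1) (\<lambda>i. x (Suc i)) \<noteq> 0"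
  shows "mpoly_eval n c x = (if lam 0 = r
           then (\<Prod>i<n - 1. x (Suc i)) ^ r * Symp_even (n - 1) (\<lambda>j. lam (Suc j)) (\<lambda>i. x (Suc i))
           else 0)"
proof -
  let ?N = "\<lambda>t. det (even_symp_mat n lam (x(0 := t)))"
  let ?D = "\<lambda>t. even_symp_den n (x(0 := t))"
  have N: "((\<lambda>t. t ^ (lam 0 + n) * ?N t)
      \<longlongrightarrow> - det (even_symp_mat (n - 1) (\<lambda>j. lam (Suc j)) (\<lambda>i. x (Suc i)))) (at 0)"
    by (rule tendsto_det_even_symp_mat_first_var[where \<mu>=lam, OF n lam])
  have D: "((\<lambda>t. t ^ n * ?D t) \<longlongrightarrow> - even_symp_den (n - 1) (\<lambda>i. x (Suc i))) (at 0)"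
    using tendsto_det_even_symp_mat_first_var[OF n, of "\<lambda>_. 0"] unfolding even_symp_den_def by simp
  have "mpoly_eval n c (x(0 := t)) = (t * (\<Prod>i<n - 1. x (Suc i))) ^ r * (?N t / ?D t)"
    if "t \<noteq> 0" "?D t \<noteq> 0" for t
  proof -
    have "\<forall>i<n. (x(0 := t)) i \<noteq> 0" using that(1) x_nz by auto
    then have "(\<Prod>i<n. (x(0 := t)) i) ^ r * Symp_even n lam (x(0 := t)) = mpoly_eval n c (x(0 := t))"
      using c that(2) by blast
    then show ?thesis unfolding prod_lessThan_upd_0[OF n] Symp_even_def by (rule sym)
  qed
  from value_at_zero_from_limits[OF isCont_mpoly_eval_upd N D _ r this] den x0
  show ?thesis by (simp add: Symp_even_def fun_upd_idem)
qed

theorem Symp_odd_mpoly_specialization: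
  assumes "n \<ge> 1" and "is_partition lam (n + 1)" and "lam 0 \<le> r" and "z \<noteq> 0"
  shows "\<exists>c. is_mpoly n c \<and>
    (\<forall>x. (\<forall>i<n. x i \<noteq> 0) \<and> odd_symp_den n x z \<noteq> 0 \<longrightarrow>
         (\<Prod>i<n. x i) ^ r * Symp_odd n lam x z = mpoly_eval n c x) \<and>
    (\<forall>x. x 0 = 0 \<and> (\<forall>i. 1 \<le> i \<and> i < n \<longrightarrow> x i \<noteq> 0) \<and> odd_symp_den (n - 1) (\<lambda>i. x (Suc i)) z \<noteq> 0 \<longrightarrow>
         mpoly_eval n c x = (if lam 0 = r
           then (\<Prod>i<n - 1. x (Suc i)) ^ r * Symp_odd (n - 1) (\<lambda>j. lam (Suc j)) (\<lambda>i. x (Suc i)) z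
           else 0))"
proof -
  have lam: "\<And>j. lam j \<le> lam 0" using assms(2) by (simp add: is_partition_def)
  obtain c where "is_mpoly n c" and c: "\<forall>x. (\<forall>i<n. x i \<noteq> 0) \<and> odd_symp_den n x z \<noteq> 0 \<longrightarrow>
      (\<Prod>i<n. x i) ^ r * Symp_odd n lam x z = mpoly_eval n c x"
    using Symp_odd_times_monomial_mpoly[where lam=lam, OF lam assms(3,4)] by blast
  then show ?thesis using Symp_odd_mpoly_at_first_var_zero[where lam=lam, OF assms(1) lam assms(3) c] by blast
qed

theorem Symp_even_mpoly_specialization:
  assumes "n \<ge> 1" and "is_partition lam n" and "lam 0 \<le> r"
  shows "\<exists>c. is_mpoly n c \<and>
    (\<forall>x. (\<forall>i<n. x i \<noteq> 0) \<and> even_symp_den n x \<noteq> 0 \<longrightarrow>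
         (\<Prod>i<n. x i) ^ r * Symp_even n lam x = mpoly_eval n c x) \<and>
    (\<forall>x. x 0 = 0 \<and> (\<forall>i. 1 \<le> i \<and> i < n \<longrightarrow> x i \<noteq> 0) \<and> even_symp_den (n - 1) (\<lambda>i. x (Suc i)) \<noteq> 0 \<longrightarrow>
         mpoly_eval n c x = (if lam 0 = r
           then (\<Prod>i<n - 1. x (Suc i)) ^ r * Symp_even (n - 1) (\<lambda>j. lam (Suc j)) (\<lambda>i. x (Suc i))
           else 0))"
proof -
  have lam: "\<And>j. lam j \<le> lam 0" using assms(2) by (simp add: is_partition_def)
  obtain c where "is_mpoly n c" and c: "\<forall>x. (\<forall>i<n. x i \<noteq> 0) \<and> even_symp_den n x \<noteq> 0 \<longrightarrow>
      (\<Prod>i<n. x i) ^ r * Symp_even n lam x = mpoly_eval n c x"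
    using Symp_even_times_monomial_mpoly[where lam=lam, OF lam assms(3)] by blast
  then show ?thesis using Symp_even_mpoly_at_first_var_zero[where lam=lam, OF assms(1) lam assms(3) c] by blast
qed

theorem mainTheorem1:
  fixes n r :: nat
  assumes "n \<ge> 1"
  shows
  "(\<forall>(lam :: nat \<Rightarrow> nat) (z :: complex).
      is_partition lam (n+1) \<and> lam 0 \<le> r \<and> z \<noteq> 0 \<longrightarrow>
      (\<exists>c. is_mpoly n c \<and>
         (\<forall>x. (\<forall>i<n. x i \<noteq> 0) \<and> odd_symp_den n x z \<noteq> 0 \<longrightarrow>
              (\<Prod>i<n. x i) ^ r * Symp_odd n lam x z = mpoly_eval n c x) \<and>
         (\<forall>x. x 0 = 0 \<and> (\<forall>i. 1 \<le> i \<and> i < n \<longrightarrow> x i \<noteq> 0)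
                \<and> odd_symp_den (n-1) (\<lambda>i. x (Suc i)) z \<noteq> 0 \<longrightarrow>
              mpoly_eval n c x =
                (if lam 0 = r
                 then (\<Prod>i<n-1. x (Suc i)) ^ r
                        * Symp_odd (n-1) (\<lambda>j. lam (Suc j)) (\<lambda>i. x (Suc i)) z
                 else 0))))
   \<and>
   (\<forall>(lam :: nat \<Rightarrow> nat).
      is_partition lam n \<and> lam 0 \<le> r \<longrightarrow>
      (\<exists>c. is_mpoly n c \<and>
         (\<forall>x. (\<forall>i<n. x i \<noteq> 0) \<and> even_symp_den n x \<noteq> 0 \<longrightarrow>
              (\<Prod>i<n. x i) ^ r * Symp_even n lam x = mpoly_eval n c x) \<and>
         (\<forall>x. x 0 = 0 \<and> (\<forall>i. 1 \<le> i \<and> i < n \<longrightarrow> x i \<noteq> 0)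
                \<and> even_symp_den (n-1) (\<lambda>i. x (Suc i)) \<noteq> 0 \<longrightarrow>
              mpoly_eval n c x =
                (if lam 0 = r
                 then (\<Prod>i<n-1. x (Suc i)) ^ r
                        * Symp_even (n-1) (\<lambda>j. lam (Suc j)) (\<lambda>i. x (Suc i))
                 else 0))))"
  using Symp_odd_mpoly_specialization[OF assms] Symp_even_mpoly_specialization[OF assms] by blast

end
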